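(* Let $A$ be any (possibly randomized) online algorithm for Machine Covering on $m$ machines that is $c$-competitive in the adversarial model when it knows the input length $n$ beforehand. Then there is an online strategy $B$ that does not know $n$ and is $c$-competitive in the adversarial model. If $A$ is deterministic, $B$ can be chosen deterministic as well.
   Context: Machine Covering: jobs with non-negative sizes are assigned to $m$ identical parallel machines, maximizing the minimum machine load; $\mathrm{OPT}$ denotes the optimal offline minimum load. Computability is ignored. A deterministic online algorithm that does not know $n$ is a function mapping every finite job sequence $J_1,\dots,J_{n'}$ to the machine onto which $J_{n'}$ is scheduled; a deterministic online algorithm that knows $n$ maps tuples $(n,J_1,\dots,J_{n'})$ with $n\ge n'$ to the machine onto which $J_{n'}$ is scheduled, where $n$ is the total input length. A randomized online algorithm is a probability distribution over deterministic ones. An algorithm is $c$-competitive in the adversarial model if for every input sequence (in every order) its expected minimum load is at least $\mathrm{OPT}/c$. *)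

theory Defs
  imports "HOL-Probability.Probability"
begin

definition nonneg_input :: "real list \<Rightarrow> bool" where
  "nonneg_input xs \<longleftrightarrow> (\<forall>x\<in>set xs. 0 \<le> x)"

definition mach_load :: "(nat \<Rightarrow> nat) \<Rightarrow> real list \<Rightarrow> nat \<Rightarrow> real" where
  "mach_load asg xs j = (\<Sum>i\<in>{i. i < length xs \<and> asg i = j}. xs ! i)"

definition min_load :: "nat \<Rightarrow> (nat \<Rightarrow> nat) \<Rightarrow> real list \<Rightarrow> real" where
  "min_load m asg xs = Min ((\<lambda>j. mach_load asg xs j) ` {..<m})"

definition OPT :: "nat \<Rightarrow> real list \<Rightarrow> real" where
  "OPT m xs = Max ((\<lambda>asg. min_load m asg xs) ` ({..<length xs} \<rightarrow>\<^sub>E {..<m}))"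

text \<open>Deterministic online algorithm not knowing n: maps the prefix J_1..J_n'
  to the machine of J_n'.\<close>
definition det_alg :: "nat \<Rightarrow> (real list \<Rightarrow> nat) \<Rightarrow> bool" where
  "det_alg m D \<longleftrightarrow> (\<forall>xs. xs \<noteq> [] \<and> nonneg_input xs \<longrightarrow> D xs < m)"

text \<open>Deterministic online algorithm knowing n: maps (n, J_1..J_n') with n \<ge> n'.\<close>
definition det_alg_n :: "nat \<Rightarrow> (nat \<Rightarrow> real list \<Rightarrow> nat) \<Rightarrow> bool" where
  "det_alg_n m D \<longleftrightarrow>
     (\<forall>n xs. xs \<noteq> [] \<and> length xs \<le> n \<and> nonneg_input xs \<longrightarrow> D n xs < m)"

definition alg_min_load :: "nat \<Rightarrow> (real list \<Rightarrow> nat) \<Rightarrow> real list \<Rightarrow> real" where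
  "alg_min_load m D xs = min_load m (\<lambda>i. D (take (Suc i) xs)) xs"

definition alg_n_min_load :: "nat \<Rightarrow> (nat \<Rightarrow> real list \<Rightarrow> nat) \<Rightarrow> real list \<Rightarrow> real" where
  "alg_n_min_load m D xs = min_load m (\<lambda>i. D (length xs) (take (Suc i) xs)) xs"

text \<open>Randomized algorithms: probability distributions over deterministic ones.
  Evaluating the algorithm on any prefix must be a random variable.\<close>
definition rand_alg :: "nat \<Rightarrow> (real list \<Rightarrow> nat) measure \<Rightarrow> bool" where
  "rand_alg m M \<longleftrightarrow> prob_space M \<and> (\<forall>D\<in>space M. det_alg m D) \<and>
     (\<forall>xs. (\<lambda>D. D xs) \<in> measurable M (count_space UNIV))"

definition rand_alg_n :: "nat \<Rightarrow> (nat \<Rightarrow> real list \<Rightarrow> nat) measure \<Rightarrow> bool" where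
  "rand_alg_n m M \<longleftrightarrow> prob_space M \<and> (\<forall>D\<in>space M. det_alg_n m D) \<and>
     (\<forall>n xs. (\<lambda>D. D n xs) \<in> measurable M (count_space UNIV))"

definition det_competitive :: "nat \<Rightarrow> real \<Rightarrow> (real list \<Rightarrow> nat) \<Rightarrow> bool" where
  "det_competitive m c D \<longleftrightarrow>
     (\<forall>xs. nonneg_input xs \<longrightarrow> alg_min_load m D xs \<ge> OPT m xs / c)"

definition det_competitive_n :: "nat \<Rightarrow> real \<Rightarrow> (nat \<Rightarrow> real list \<Rightarrow> nat) \<Rightarrow> bool" where
  "det_competitive_n m c D \<longleftrightarrow>
     (\<forall>xs. nonneg_input xs \<longrightarrow> alg_n_min_load m D xs \<ge> OPT m xs / c)"

definition rand_competitive :: "nat \<Rightarrow> real \<Rightarrow> (real list \<Rightarrow> nat) measure \<Rightarrow> bool" where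
  "rand_competitive m c M \<longleftrightarrow>
     (\<forall>xs. nonneg_input xs \<longrightarrow>
        (\<integral>\<^sup>+ D. ennreal (alg_min_load m D xs) \<partial>M) \<ge> ennreal (OPT m xs / c))"

definition rand_competitive_n :: "nat \<Rightarrow> real \<Rightarrow> (nat \<Rightarrow> real list \<Rightarrow> nat) measure \<Rightarrow> bool" where
  "rand_competitive_n m c M \<longleftrightarrow>
     (\<forall>xs. nonneg_input xs \<longrightarrow>
        (\<integral>\<^sup>+ D. ennreal (alg_n_min_load m D xs) \<partial>M) \<ge> ennreal (OPT m xs / c))"

end

theory Submission
  imports Defs
begin

(* Run with horizon N, an algorithm A that knows n serves every input xs of length at most N
  as an algorithm that does not know n: appending zero jobs up to length N changes neither
  OPT nor any minimum load, so A's decisions on the prefixes of xs are c-competitive on xs.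
  For a fixed input only the finitely many decisions on its prefixes matter, hence "valid and
  c-competitive on xs" is a closed condition in a compact product space, and A_N satisfies it
  for all N >= |xs|. By compactness some point satisfies all these conditions at once.
  For randomized algorithms the points are families of laws of decision sequences; a limit
  family is realised by a single uniform seed u in [0,1): the decisions on xs are read off the
  interval containing u in a partition of [0,1) that is refined along prefixes. *)

section \<open>Loads of padded inputs\<close>

lemma min_load_cong:
  assumes "\<And>i. i < length xs \<Longrightarrow> f i = g i"
  shows "min_load m f xs = min_load m g xs"
proof -
  have "mach_load f xs j = mach_load g xs j" for j
    unfolding mach_load_def using assms by (intro sum.cong) auto
  then show ?thesis unfolding min_load_def by simp
qed

lemma min_load_nonneg:
  assumes "0 < m" and "nonneg_input xs"
  shows "0 \<le> min_load m f xs"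
proof -
  have "0 \<le> mach_load f xs j" for j
    unfolding mach_load_def using assms(2) by (intro sum_nonneg) (auto simp: nonneg_input_def)
  then show ?thesis unfolding min_load_def using assms(1) by (subst Min_ge_iff) auto
qed

lemma nonneg_input_take: "nonneg_input xs \<Longrightarrow> nonneg_input (take n xs)"
  by (auto simp: nonneg_input_def dest: in_set_takeD)

lemma nonneg_input_butlast: "nonneg_input xs \<Longrightarrow> nonneg_input (butlast xs)"
  by (auto simp: nonneg_input_def dest: in_set_butlastD)

lemma nonneg_input_append_zeros: "nonneg_input xs \<Longrightarrow> nonneg_input (xs @ replicate r 0)"
  by (auto simp: nonneg_input_def)

lemma min_load_append_zeros: "min_load m f (xs @ replicate r 0) = min_load m f xs"
proof -
  have "mach_load f (xs @ replicate r 0) j = mach_load f xs j" for j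
    unfolding mach_load_def by (rule sum.mono_neutral_cong_right) (auto simp: nth_append)
  then show ?thesis unfolding min_load_def by simp
qed

lemma OPT_append_zeros:
  assumes "0 < m"
  shows "OPT m (xs @ replicate r 0) = OPT m xs"
proof -
  let ?k = "length xs"
  let ?val = "\<lambda>asg. min_load m asg xs"
  have "?val ` ({..<?k + r} \<rightarrow>\<^sub>E {..<m}) = ?val ` ({..<?k} \<rightarrow>\<^sub>E {..<m})"
  proof (intro equalityI image_subsetI)
    fix asg assume "asg \<in> {..<?k + r} \<rightarrow>\<^sub>E {..<m}"
    then have "restrict asg {..<?k} \<in> {..<?k} \<rightarrow>\<^sub>E {..<m}" by (simp add: PiE_iff)
    moreover have "?val asg = ?val (restrict asg {..<?k})" by (rule min_load_cong) simp
    ultimately show "?val asg \<in> ?val ` ({..<?k} \<rightarrow>\<^sub>E {..<m})" by blast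
  next
    fix asg assume asg: "asg \<in> {..<?k} \<rightarrow>\<^sub>E {..<m}"
    define ext where "ext i = (if i < ?k then asg i else if i < ?k + r then 0 else undefined)" for i
    have "ext \<in> {..<?k + r} \<rightarrow>\<^sub>E {..<m}"
      using asg assms by (simp add: ext_def PiE_iff extensional_def)
    moreover have "?val asg = ?val ext" by (rule min_load_cong) (simp add: ext_def)
    ultimately show "?val asg \<in> ?val ` ({..<?k + r} \<rightarrow>\<^sub>E {..<m})" by blast
  qed
  then show ?thesis unfolding OPT_def by (simp add: min_load_append_zeros)
qed

definition decisions :: "(real list \<Rightarrow> nat) \<Rightarrow> real list \<Rightarrow> nat list" where
  "decisions D xs = map (\<lambda>i. D (take (Suc i) xs)) [0..<length xs]"

definition assignments :: "nat \<Rightarrow> nat \<Rightarrow> nat list set" where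
  "assignments m k = {a. set a \<subseteq> {..<m} \<and> length a = k}"

definition assignment_min_load :: "nat \<Rightarrow> nat list \<Rightarrow> real list \<Rightarrow> real" where
  "assignment_min_load m a xs = min_load m (\<lambda>i. a ! i) xs"

lemma decisions_snoc: "decisions D (xs @ [x]) = decisions D xs @ [D (xs @ [x])]"
  by (simp add: decisions_def)

lemma finite_assignments: "finite (assignments m k)"
  unfolding assignments_def by (rule finite_lists_length_eq) simp

lemma assignments_0: "assignments m 0 = {[]}"
  by (auto simp: assignments_def)

lemma assignments_Suc:
  "assignments m (Suc k) = (\<lambda>(a, j). a @ [j]) ` (assignments m k \<times> {..<m})"
proof (intro equalityI subsetI)
  fix b assume b: "b \<in> assignments m (Suc k)"
  have "b \<noteq> []" using b by (auto simp: assignments_def)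
  then have "b = butlast b @ [last b]" by simp
  moreover have "butlast b \<in> assignments m k" and "last b < m"
    using b last_in_set[OF \<open>b \<noteq> []\<close>] by (auto simp: assignments_def dest: in_set_butlastD)
  ultimately show "b \<in> (\<lambda>(a, j). a @ [j]) ` (assignments m k \<times> {..<m})"
    by (intro image_eqI[where x="(butlast b, last b)"]) auto
qed (auto simp: assignments_def)

lemma decisions_in_assignments:
  assumes "\<And>i. i < length xs \<Longrightarrow> D (take (Suc i) xs) < m"
  shows "decisions D xs \<in> assignments m (length xs)"
  using assms by (auto simp: assignments_def decisions_def)

lemma alg_min_load_decisions:
  "alg_min_load m D xs = assignment_min_load m (decisions D xs) xs"
  unfolding alg_min_load_def assignment_min_load_def decisions_def
  by (rule min_load_cong) simp

lemma alg_min_load_cong: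
  assumes "\<And>i. i < length xs \<Longrightarrow> D (take (Suc i) xs) = D' (take (Suc i) xs)"
  shows "alg_min_load m D xs = alg_min_load m D' xs"
  unfolding alg_min_load_def using assms by (rule min_load_cong)

lemma alg_n_min_load_append_zeros:
  assumes "length xs \<le> N"
  shows "alg_n_min_load m A (xs @ replicate (N - length xs) 0) = alg_min_load m (A N) xs"
proof -
  have "length (xs @ replicate (N - length xs) 0) = N" using assms by simp
  then show ?thesis
    unfolding alg_n_min_load_def alg_min_load_def min_load_append_zeros
    by (intro min_load_cong) simp
qed

lemma det_alg_n_pos:
  assumes "det_alg_n m A"
  shows "0 < m"
proof -
  have "nonneg_input [0]" by (simp add: nonneg_input_def)
  then have "A 1 [0] < m" using assms[unfolded det_alg_n_def, rule_format, of "[0]" 1] by simp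
  then show ?thesis by simp
qed

lemma rand_alg_n_pos:
  assumes "rand_alg_n m MA"
  shows "0 < m"
proof -
  have "prob_space MA" using assms unfolding rand_alg_n_def by blast
  then obtain D where "D \<in> space MA" using prob_space.not_empty by blast
  then have "det_alg_n m D" using assms unfolding rand_alg_n_def by blast
  then show ?thesis by (rule det_alg_n_pos)
qed

lemma det_alg_n_prefix:
  assumes "det_alg_n m A" and "nonneg_input xs" and "length xs \<le> N" and "i < length xs"
  shows "A N (take (Suc i) xs) < m"
proof -
  have "take (Suc i) xs \<noteq> []" and "length (take (Suc i) xs) \<le> N"
    using assms(3,4) by (auto simp: take_eq_Nil)
  with assms(1)[unfolded det_alg_n_def, rule_format] nonneg_input_take[OF assms(2)]
  show ?thesis by blast
qed

lemma det_competitive_n_horizon: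
  assumes "0 < m" and "det_competitive_n m c A" and "nonneg_input xs" and "length xs \<le> N"
  shows "OPT m xs / c \<le> alg_min_load m (A N) xs"
proof -
  let ?ys = "xs @ replicate (N - length xs) 0"
  have "OPT m ?ys / c \<le> alg_n_min_load m A ?ys"
    using assms(2)[unfolded det_competitive_n_def, rule_format]
      nonneg_input_append_zeros[OF assms(3)] .
  then show ?thesis
    unfolding OPT_append_zeros[OF assms(1)] alg_n_min_load_append_zeros[OF assms(4)] .
qed

lemma rand_competitive_n_horizon:
  assumes "0 < m" and "rand_competitive_n m c MA" and "nonneg_input xs" and "length xs \<le> N"
  shows "ennreal (OPT m xs / c) \<le> (\<integral>\<^sup>+D. ennreal (alg_min_load m (D N) xs) \<partial>MA)"
proof -
  let ?ys = "xs @ replicate (N - length xs) 0"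
  have "ennreal (OPT m ?ys / c) \<le> (\<integral>\<^sup>+D. ennreal (alg_n_min_load m D ?ys) \<partial>MA)"
    using assms(2)[unfolded rand_competitive_n_def, rule_format]
      nonneg_input_append_zeros[OF assms(3)] .
  then show ?thesis
    unfolding OPT_append_zeros[OF assms(1)] alg_n_min_load_append_zeros[OF assms(4)] .
qed

section \<open>Compactness\<close>

lemma compact_PiE_UNIV:
  assumes "\<And>i. compact (K i)"
  shows "compact (Pi\<^sub>E UNIV K)"
proof -
  have "compactin (product_topology (\<lambda>_. euclidean) UNIV) (Pi\<^sub>E UNIV K)"
    unfolding compactin_PiE using assms by simp
  then show ?thesis by (simp add: euclidean_product_topology)
qed

lemma compact_eventually_closed_common_point:
  fixes v :: "nat \<Rightarrow> 'a::topological_space"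
  assumes "compact K" and "\<And>N. v N \<in> K"
    and "\<And>j. j \<in> J \<Longrightarrow> closed (C j)"
    and "\<And>j. j \<in> J \<Longrightarrow> eventually (\<lambda>N. v N \<in> C j) sequentially"
  shows "\<exists>x\<in>K. \<forall>j\<in>J. x \<in> C j"
proof -
  have "K \<inter> \<Inter>(C ` J) \<noteq> {}"
  proof (rule compact_imp_fip[OF assms(1)])
    fix F assume "finite F" and "F \<subseteq> C ` J"
    then obtain J' where J': "J' \<subseteq> J" "finite J'" and F: "F = C ` J'"
      using finite_subset_image by metis
    have "\<forall>j\<in>J'. eventually (\<lambda>N. v N \<in> C j) sequentially" using J'(1) assms(4) by blast
    then have "eventually (\<lambda>N. \<forall>j\<in>J'. v N \<in> C j) sequentially"
      using J'(2) by (rule eventually_ball_finite[rotated])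
    then obtain N where "\<forall>j\<in>J'. v N \<in> C j"
      unfolding eventually_sequentially by blast
    then show "K \<inter> \<Inter>F \<noteq> {}" using assms(2)[of N] F by blast
  next
    show "closed T" if "T \<in> C ` J" for T using that assms(3) by blast
  qed
  then show ?thesis by blast
qed

lemma open_Collect_finitely_determined:
  fixes Q :: "('a \<Rightarrow> 'b::discrete_topology) \<Rightarrow> bool"
  assumes "finite S" and "\<And>f g. (\<And>p. p \<in> S \<Longrightarrow> f p = g p) \<Longrightarrow> Q f \<longleftrightarrow> Q g"
  shows "open {f. Q f}"
proof (subst open_subopen, intro ballI)
  fix f assume "f \<in> {f. Q f}"
  moreover have "open (\<Inter>p\<in>S. (\<lambda>g. g p) -` {f p})"
    using assms(1) by (intro open_INT ballI open_vimage discrete_topology_class.open_discrete) simp_all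
  moreover have "(\<Inter>p\<in>S. (\<lambda>g. g p) -` {f p}) \<subseteq> {f. Q f}"
  proof
    fix g assume "g \<in> (\<Inter>p\<in>S. (\<lambda>g. g p) -` {f p})"
    then have "Q f \<longleftrightarrow> Q g" by (intro assms(2)) simp
    then show "g \<in> {f. Q f}" using \<open>f \<in> {f. Q f}\<close> by simp
  qed
  ultimately show "\<exists>T. open T \<and> f \<in> T \<and> T \<subseteq> {f. Q f}" by blast
qed

lemma closed_Collect_finitely_determined:
  fixes Q :: "('a \<Rightarrow> 'b::discrete_topology) \<Rightarrow> bool"
  assumes "finite S" and "\<And>f g. (\<And>p. p \<in> S \<Longrightarrow> f p = g p) \<Longrightarrow> Q f \<longleftrightarrow> Q g"
  shows "closed {f. Q f}"
proof -
  have "open {f. \<not> Q f}"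
    using assms(1) by (rule open_Collect_finitely_determined) (use assms(2) in blast)
  then show ?thesis by (simp add: closed_def Collect_neg_eq)
qed

definition competitive_on :: "nat \<Rightarrow> real \<Rightarrow> (real list \<Rightarrow> nat) \<Rightarrow> real list \<Rightarrow> bool" where
  "competitive_on m c B xs \<longleftrightarrow>
     (\<forall>i<length xs. B (take (Suc i) xs) < m) \<and> OPT m xs / c \<le> alg_min_load m B xs"

lemma closed_competitive_on: "closed {B. competitive_on m c B xs}"
  unfolding competitive_on_def
proof (rule closed_Collect_finitely_determined[where S="(\<lambda>i. take (Suc i) xs) ` {..<length xs}"])
  fix B B' :: "real list \<Rightarrow> nat"
  assume "\<And>p. p \<in> (\<lambda>i. take (Suc i) xs) ` {..<length xs} \<Longrightarrow> B p = B' p"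
  then have agree: "\<And>i. i < length xs \<Longrightarrow> B (take (Suc i) xs) = B' (take (Suc i) xs)"
    by blast
  then have "alg_min_load m B xs = alg_min_load m B' xs" by (rule alg_min_load_cong)
  with agree show "(\<forall>i<length xs. B (take (Suc i) xs) < m) \<and> OPT m xs / c \<le> alg_min_load m B xs
    \<longleftrightarrow> (\<forall>i<length xs. B' (take (Suc i) xs) < m) \<and> OPT m xs / c \<le> alg_min_load m B' xs"
    by simp
qed simp

lemma det_alg_competitive_if_competitive_on:
  assumes B: "\<And>xs. nonneg_input xs \<Longrightarrow> competitive_on m c B xs"
  shows "det_alg m B \<and> det_competitive m c B"
proof
  show "det_alg m B"
    unfolding det_alg_def
  proof (intro allI impI)
    fix xs :: "real list" assume xs: "xs \<noteq> [] \<and> nonneg_input xs"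
    then have "length xs - 1 < length xs" by simp
    then have "B (take (Suc (length xs - 1)) xs) < m"
      using B xs unfolding competitive_on_def by blast
    then show "B xs < m" using xs by simp
  qed
  show "det_competitive m c B"
    unfolding det_competitive_def using B unfolding competitive_on_def by blast
qed

lemma det_alg_of_det_alg_n:
  assumes A: "det_alg_n m A" and comp: "det_competitive_n m c A"
  shows "\<exists>B. det_alg m B \<and> det_competitive m c B"
proof -
  have m: "0 < m" using det_alg_n_pos[OF A] .
  define v where "v N ys = min (A N ys) m" for N ys
  have eventually_competitive: "eventually (\<lambda>N. competitive_on m c (v N) xs) sequentially"
    if xs: "nonneg_input xs" for xs
    unfolding eventually_sequentially
  proof (intro exI allI impI)
    fix N assume N: "length xs \<le> N"
    have A_prefix: "A N (take (Suc i) xs) < m" if "i < length xs" for i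
      using det_alg_n_prefix[OF A xs N that] .
    then have v_prefix: "v N (take (Suc i) xs) = A N (take (Suc i) xs)" if "i < length xs" for i
      using that by (simp add: v_def)
    then have "alg_min_load m (v N) xs = alg_min_load m (A N) xs"
      by (rule alg_min_load_cong)
    then show "competitive_on m c (v N) xs"
      using A_prefix v_prefix det_competitive_n_horizon[OF m comp xs N]
      by (simp add: competitive_on_def)
  qed
  have "compact (UNIV \<rightarrow>\<^sub>E {..m})" by (intro compact_PiE_UNIV finite_imp_compact) simp
  moreover have "v N \<in> UNIV \<rightarrow>\<^sub>E {..m}" for N by (simp add: v_def PiE_UNIV_domain)
  ultimately have "\<exists>B\<in>UNIV \<rightarrow>\<^sub>E {..m}. \<forall>xs\<in>Collect nonneg_input. B \<in> {B. competitive_on m c B xs}"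
    by (rule compact_eventually_closed_common_point)
      (use closed_competitive_on eventually_competitive in auto)
  then obtain B where "\<And>xs. nonneg_input xs \<Longrightarrow> competitive_on m c B xs" by blast
  then show ?thesis using det_alg_competitive_if_competitive_on by blast
qed

section \<open>Laws of decision sequences\<close>

text \<open>P (xs, a) is the probability that the decisions on the nonempty prefixes of xs
  are a; the last clause makes the law for xs refine the law for butlast xs.\<close>

definition is_decision_law ::
    "nat \<Rightarrow> (real list \<times> nat list \<Rightarrow> real) \<Rightarrow> real list \<Rightarrow> bool" where
  "is_decision_law m P xs \<longleftrightarrow>
     (\<forall>a\<in>assignments m (length xs). 0 \<le> P (xs, a)) \<and>
     (\<Sum>a\<in>assignments m (length xs). P (xs, a)) = 1 \<and>
     (xs \<noteq> [] \<longrightarrow>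
       (\<forall>a\<in>assignments m (length xs - 1). P (butlast xs, a) = (\<Sum>j<m. P (xs, a @ [j]))))"

definition expected_min_load ::
    "nat \<Rightarrow> (real list \<times> nat list \<Rightarrow> real) \<Rightarrow> real list \<Rightarrow> real" where
  "expected_min_load m P xs =
     (\<Sum>a\<in>assignments m (length xs). P (xs, a) * assignment_min_load m a xs)"

definition decision_law ::
    "'w measure \<Rightarrow> ('w \<Rightarrow> real list \<Rightarrow> nat) \<Rightarrow> real list \<times> nat list \<Rightarrow> real" where
  "decision_law M X = (\<lambda>(xs, a). measure M {\<omega> \<in> space M. decisions (X \<omega>) xs = a})"

lemma closed_is_decision_law: "closed {P. is_decision_law m P xs}"
proof -
  have coordinate: "continuous_on UNIV (\<lambda>P :: real list \<times> nat list \<Rightarrow> real. P p)" for p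
    by simp
  have "closed {P :: real list \<times> nat list \<Rightarrow> real.
      \<forall>a. a \<in> assignments m (length xs) \<longrightarrow> 0 \<le> P (xs, a)}"
    by (intro closed_Collect_all closed_Collect_imp closed_Collect_le continuous_on_const coordinate)
      simp
  moreover have "closed {P :: real list \<times> nat list \<Rightarrow> real.
      (\<Sum>a\<in>assignments m (length xs). P (xs, a)) = 1}"
    by (intro closed_Collect_eq continuous_on_sum continuous_on_const coordinate)
  moreover have "closed {P :: real list \<times> nat list \<Rightarrow> real. xs \<noteq> [] \<longrightarrow> (\<forall>a.
      a \<in> assignments m (length xs - 1) \<longrightarrow> P (butlast xs, a) = (\<Sum>j<m. P (xs, a @ [j])))}"
    by (intro closed_Collect_imp closed_Collect_all closed_Collect_eq continuous_on_sum coordinate)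
      simp_all
  ultimately show ?thesis
    unfolding is_decision_law_def Ball_def by (intro closed_Collect_conj)
qed

lemma closed_expected_min_load_ge: "closed {P. r \<le> expected_min_load m P xs}"
  unfolding expected_min_load_def
  by (intro closed_Collect_le continuous_on_const continuous_on_sum continuous_on_mult
      continuous_on_id continuous_on_component) simp_all

lemma expected_min_load_nonneg:
  assumes "0 < m" and "nonneg_input xs" and "is_decision_law m P xs"
  shows "0 \<le> expected_min_load m P xs"
  using assms min_load_nonneg[OF assms(1,2)]
  unfolding expected_min_load_def is_decision_law_def assignment_min_load_def
  by (intro sum_nonneg mult_nonneg_nonneg) auto

lemma measurable_decisions:
  assumes "\<And>ys. (\<lambda>\<omega>. X \<omega> ys) \<in> measurable M (count_space UNIV)"
  shows "(\<lambda>\<omega>. decisions (X \<omega>) xs) \<in> measurable M (count_space UNIV)"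
proof (induction xs rule: rev_induct)
  case Nil
  show ?case by (simp add: decisions_def)
next
  case (snoc x xs)
  have "(\<lambda>\<omega>. decisions (X \<omega>) xs @ [X \<omega> (xs @ [x])]) \<in> measurable M (count_space UNIV)"
  proof (rule measurable_compose_countable[where g="\<lambda>\<omega>. decisions (X \<omega>) xs"])
    show "(\<lambda>\<omega>. a @ [X \<omega> (xs @ [x])]) \<in> measurable M (count_space UNIV)" for a
      using measurable_compose[OF assms measurable_count_space] .
  qed (rule snoc.IH)
  then show ?case by (simp add: decisions_snoc)
qed

lemma nn_integral_finite_range:
  assumes X: "X \<in> measurable M (count_space UNIV)" and "finite L"
    and range: "\<And>\<omega>. \<omega> \<in> space M \<Longrightarrow> X \<omega> \<in> L"
  shows "(\<integral>\<^sup>+\<omega>. g (X \<omega>) \<partial>M)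
    = (\<Sum>a\<in>L. g a * emeasure M {\<omega> \<in> space M. X \<omega> = a})"
proof -
  have events: "{\<omega> \<in> space M. X \<omega> = a} \<in> sets M" for a
    using X by measurable
  have "(\<integral>\<^sup>+\<omega>. g (X \<omega>) \<partial>M)
      = (\<integral>\<^sup>+\<omega>. (\<Sum>a\<in>L. g a * indicator {\<omega> \<in> space M. X \<omega> = a} \<omega>) \<partial>M)"
  proof (rule nn_integral_cong)
    fix \<omega> assume "\<omega> \<in> space M"
    then have "(\<Sum>a\<in>L. g a * indicator {\<omega> \<in> space M. X \<omega> = a} \<omega>)
        = (\<Sum>a\<in>L. if a = X \<omega> then g a else 0)"
      by (intro sum.cong) (auto simp: indicator_def)
    also have "\<dots> = g (X \<omega>)"
      using range[OF \<open>\<omega> \<in> space M\<close>] \<open>finite L\<close> by (simp add: sum.delta')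
    finally show "g (X \<omega>) = (\<Sum>a\<in>L. g a * indicator {\<omega> \<in> space M. X \<omega> = a} \<omega>)" by simp
  qed
  also have "\<dots> = (\<Sum>a\<in>L. g a * emeasure M {\<omega> \<in> space M. X \<omega> = a})"
    using events by (simp add: nn_integral_sum nn_integral_cmult_indicator)
  finally show ?thesis .
qed

lemma (in finite_measure) sum_measure_preimage:
  assumes "Y \<in> measurable M (count_space UNIV)" and "finite L"
  shows "(\<Sum>a\<in>L. measure M {\<omega> \<in> space M. Y \<omega> = a})
    = measure M {\<omega> \<in> space M. Y \<omega> \<in> L}"
proof -
  have "{\<omega> \<in> space M. Y \<omega> \<in> L} = (\<Union>a\<in>L. {\<omega> \<in> space M. Y \<omega> = a})" by blast
  moreover have "measure M (\<Union>a\<in>L. {\<omega> \<in> space M. Y \<omega> = a})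
      = (\<Sum>a\<in>L. measure M {\<omega> \<in> space M. Y \<omega> = a})"
  proof (rule finite_measure_finite_Union)
    show "(\<lambda>a. {\<omega> \<in> space M. Y \<omega> = a}) ` L \<subseteq> sets M"
      using assms(1) by (auto intro: measurable_sets_Collect[of _ _ "count_space UNIV"])
  qed (auto simp: assms(2) disjoint_family_on_def)
  ultimately show ?thesis by simp
qed

context prob_space
begin

lemma is_decision_law_decision_law:
  fixes X :: "'a \<Rightarrow> real list \<Rightarrow> nat"
  assumes meas: "\<And>ys. (\<lambda>\<omega>. X \<omega> ys) \<in> measurable M (count_space UNIV)"
    and valid: "\<And>\<omega> i. \<omega> \<in> space M \<Longrightarrow> i < length xs \<Longrightarrow> X \<omega> (take (Suc i) xs) < m"
  shows "is_decision_law m (decision_law M X) xs"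
proof -
  let ?Y = "\<lambda>ys \<omega>. decisions (X \<omega>) ys"
  have Y_meas: "?Y ys \<in> measurable M (count_space UNIV)" for ys
    using meas by (rule measurable_decisions)
  have Y_range: "?Y xs \<omega> \<in> assignments m (length xs)" if "\<omega> \<in> space M" for \<omega>
    using valid[OF that] by (rule decisions_in_assignments)
  have "(\<Sum>a\<in>assignments m (length xs). decision_law M X (xs, a))
      = measure M {\<omega> \<in> space M. ?Y xs \<omega> \<in> assignments m (length xs)}"
    unfolding decision_law_def using Y_meas finite_assignments by (simp add: sum_measure_preimage)
  also have "{\<omega> \<in> space M. ?Y xs \<omega> \<in> assignments m (length xs)} = space M"
    using Y_range by blast
  also have "measure M (space M) = 1" by (rule prob_space)
  finally have total: "(\<Sum>a\<in>assignments m (length xs). decision_law M X (xs, a)) = 1" .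
  have refine: "decision_law M X (butlast xs, a) = (\<Sum>j<m. decision_law M X (xs, a @ [j]))"
    if "xs \<noteq> []" for a
  proof -
    obtain ys x where xs: "xs = ys @ [x]" using \<open>xs \<noteq> []\<close> by (metis append_butlast_last_id)
    have "X \<omega> xs < m" if "\<omega> \<in> space M" for \<omega>
      using valid[OF that, of "length ys"] xs by simp
    then have "{\<omega> \<in> space M. ?Y ys \<omega> = a} = {\<omega> \<in> space M. ?Y xs \<omega> \<in> (\<lambda>j. a @ [j]) ` {..<m}}"
      using xs by (auto simp: decisions_snoc)
    also have "measure M \<dots> = (\<Sum>b\<in>(\<lambda>j. a @ [j]) ` {..<m}. measure M {\<omega> \<in> space M. ?Y xs \<omega> = b})"
      using Y_meas by (simp add: sum_measure_preimage)
    also have "\<dots> = (\<Sum>j<m. measure M {\<omega> \<in> space M. ?Y xs \<omega> = a @ [j]})"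
      by (simp add: sum.reindex inj_on_def)
    finally show ?thesis unfolding decision_law_def using xs by simp
  qed
  show ?thesis
    unfolding is_decision_law_def using total refine by (simp add: decision_law_def)
qed

lemma nn_integral_alg_min_load:
  fixes X :: "'a \<Rightarrow> real list \<Rightarrow> nat"
  assumes meas: "\<And>ys. (\<lambda>\<omega>. X \<omega> ys) \<in> measurable M (count_space UNIV)"
    and valid: "\<And>\<omega> i. \<omega> \<in> space M \<Longrightarrow> i < length xs \<Longrightarrow> X \<omega> (take (Suc i) xs) < m"
    and "0 < m" and "nonneg_input xs"
  shows "(\<integral>\<^sup>+\<omega>. ennreal (alg_min_load m (X \<omega>) xs) \<partial>M)
    = ennreal (expected_min_load m (decision_law M X) xs)"
proof -
  let ?L = "assignments m (length xs)"
  have load_nonneg: "0 \<le> assignment_min_load m a xs" for a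
    unfolding assignment_min_load_def using assms(3,4) by (rule min_load_nonneg)
  have "(\<integral>\<^sup>+\<omega>. ennreal (alg_min_load m (X \<omega>) xs) \<partial>M)
      = (\<integral>\<^sup>+\<omega>. ennreal (assignment_min_load m (decisions (X \<omega>) xs) xs) \<partial>M)"
    by (simp add: alg_min_load_decisions)
  also have "\<dots> = (\<Sum>a\<in>?L. ennreal (assignment_min_load m a xs)
      * emeasure M {\<omega> \<in> space M. decisions (X \<omega>) xs = a})"
    by (rule nn_integral_finite_range[OF measurable_decisions[OF meas] finite_assignments])
      (auto intro!: decisions_in_assignments valid)
  also have "\<dots> = (\<Sum>a\<in>?L. ennreal (decision_law M X (xs, a) * assignment_min_load m a xs))"
    by (intro sum.cong refl)
      (simp add: decision_law_def emeasure_eq_measure ennreal_mult' load_nonneg mult.commute)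
  also have "\<dots> = ennreal (expected_min_load m (decision_law M X) xs)"
    unfolding expected_min_load_def using load_nonneg
    by (intro sum_ennreal) (simp add: decision_law_def)
  finally show ?thesis .
qed

end

lemma decision_laws_of_rand_alg_n:
  assumes MA: "rand_alg_n m MA" and comp: "rand_competitive_n m c MA"
  shows "\<exists>P. \<forall>xs. nonneg_input xs \<longrightarrow>
    is_decision_law m P xs \<and> OPT m xs / c \<le> expected_min_load m P xs"
proof -
  interpret prob_space MA using MA unfolding rand_alg_n_def by blast
  have m: "0 < m" using MA by (rule rand_alg_n_pos)
  have meas: "(\<lambda>D. D N ys) \<in> measurable MA (count_space UNIV)" for N ys
    using MA unfolding rand_alg_n_def by blast
  define good where
    "good xs = {P. is_decision_law m P xs \<and> OPT m xs / c \<le> expected_min_load m P xs}" for xs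
  define v where "v N = decision_law MA (\<lambda>D. D N)" for N
  have eventually_good: "eventually (\<lambda>N. v N \<in> good xs) sequentially"
    if xs: "nonneg_input xs" for xs
    unfolding eventually_sequentially
  proof (intro exI allI impI)
    fix N assume N: "length xs \<le> N"
    have valid: "D N (take (Suc i) xs) < m" if "D \<in> space MA" and "i < length xs" for D i
    proof -
      have "det_alg_n m D" using MA \<open>D \<in> space MA\<close> unfolding rand_alg_n_def by blast
      then show ?thesis using xs N \<open>i < length xs\<close> by (rule det_alg_n_prefix)
    qed
    have law: "is_decision_law m (v N) xs"
      unfolding v_def using meas valid by (rule is_decision_law_decision_law)
    have "ennreal (OPT m xs / c) \<le> (\<integral>\<^sup>+D. ennreal (alg_min_load m (D N) xs) \<partial>MA)"
      using m comp xs N by (rule rand_competitive_n_horizon)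
    also have "\<dots> = ennreal (expected_min_load m (v N) xs)"
      unfolding v_def using meas valid m xs by (rule nn_integral_alg_min_load)
    finally have "OPT m xs / c \<le> expected_min_load m (v N) xs"
      using expected_min_load_nonneg[OF m xs law] by (simp add: ennreal_le_iff)
    with law show "v N \<in> good xs" unfolding good_def by blast
  qed
  have closed_good: "closed (good xs)" for xs
    unfolding good_def
    by (intro closed_Collect_conj closed_is_decision_law closed_expected_min_load_ge)
  have "compact (UNIV \<rightarrow>\<^sub>E {0..1::real})"
    by (intro compact_PiE_UNIV compact_Icc)
  moreover have "v N \<in> UNIV \<rightarrow>\<^sub>E {0..1}" for N
    by (simp add: v_def decision_law_def PiE_UNIV_domain split: prod.split)
  ultimately have "\<exists>P\<in>UNIV \<rightarrow>\<^sub>E {0..1}. \<forall>xs\<in>Collect nonneg_input. P \<in> good xs"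
    by (rule compact_eventually_closed_common_point) (use closed_good eventually_good in auto)
  then show ?thesis unfolding good_def by blast
qed

section \<open>Realising a consistent family of laws by a uniform seed\<close>

lemma atLeastLessThan_UN_partial_sums:
  fixes w :: "nat \<Rightarrow> real"
  assumes "\<And>i. i < n \<Longrightarrow> 0 \<le> w i"
  shows "{l ..< l + (\<Sum>i<n. w i)} = (\<Union>j<n. {l + (\<Sum>i<j. w i) ..< l + (\<Sum>i<Suc j. w i)})"
  using assms
proof (induction n)
  case 0
  show ?case by simp
next
  case (Suc n)
  have "0 \<le> (\<Sum>i<n. w i)" and "0 \<le> w n" using Suc.prems by (auto intro: sum_nonneg)
  then have "{l ..< l + (\<Sum>i<Suc n. w i)} = {l ..< l + (\<Sum>i<n. w i)} \<union>
      {l + (\<Sum>i<n. w i) ..< l + (\<Sum>i<Suc n. w i)}"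
    by auto
  also have "{l ..< l + (\<Sum>i<n. w i)} = (\<Union>j<n. {l + (\<Sum>i<j. w i) ..< l + (\<Sum>i<Suc j. w i)})"
    using Suc by simp
  finally show ?case by (simp add: lessThan_Suc Un_commute)
qed

lemma disjoint_family_on_partial_sums:
  fixes w :: "nat \<Rightarrow> real"
  assumes "\<And>i. i < n \<Longrightarrow> 0 \<le> w i"
  shows "disjoint_family_on (\<lambda>j. {l + (\<Sum>i<j. w i) ..< l + (\<Sum>i<Suc j. w i)}) {..<n}"
proof -
  let ?I = "\<lambda>j. {l + (\<Sum>i<j. w i) ..< l + (\<Sum>i<Suc j. w i)}"
  have "?I j \<inter> ?I k = {}" if "j < k" and "k < n" for j k
  proof -
    have "(\<Sum>i<Suc j. w i) \<le> (\<Sum>i<k. w i)"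
      using that assms by (intro sum_mono2) auto
    then show ?thesis by auto
  qed
  then show ?thesis
    unfolding disjoint_family_on_def by (metis Int_commute lessThan_iff linorder_neqE_nat)
qed

locale decision_laws =
  fixes m :: nat and P :: "real list \<times> nat list \<Rightarrow> real"
  assumes is_decision_law: "\<And>xs. nonneg_input xs \<Longrightarrow> is_decision_law m P xs"
begin

lemma law_nonneg: "nonneg_input xs \<Longrightarrow> a \<in> assignments m (length xs) \<Longrightarrow> 0 \<le> P (xs, a)"
  using is_decision_law unfolding is_decision_law_def by blast

lemma law_sum: "nonneg_input xs \<Longrightarrow> (\<Sum>a\<in>assignments m (length xs). P (xs, a)) = 1"
  using is_decision_law unfolding is_decision_law_def by blast

lemma law_snoc:
  assumes "nonneg_input (xs @ [x])" and "a \<in> assignments m (length xs)"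
  shows "P (xs, a) = (\<Sum>j<m. P (xs @ [x], a @ [j]))"
  using is_decision_law[OF assms(1)] assms(2) unfolding is_decision_law_def by simp

text \<open>The intervals of the one-step extensions a @ [j], j < m, of a decision sequence a
  tile the interval of a from left to right, with lengths their probabilities.\<close>

definition interval_start :: "real list \<Rightarrow> nat list \<Rightarrow> real" where
  "interval_start xs a = (\<Sum>i<length xs. \<Sum>j<a ! i. P (take (Suc i) xs, take i a @ [j]))"

definition decision_interval :: "real list \<Rightarrow> nat list \<Rightarrow> real set" where
  "decision_interval xs a = {interval_start xs a ..< interval_start xs a + P (xs, a)}"

lemma decision_interval_snoc:
  assumes "length a = length xs"
  shows "decision_interval (xs @ [x]) (a @ [j]) =
    {interval_start xs a + (\<Sum>i<j. P (xs @ [x], a @ [i])) ..<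
     interval_start xs a + (\<Sum>i<Suc j. P (xs @ [x], a @ [i]))}"
proof -
  have "interval_start (xs @ [x]) (a @ [j]) = interval_start xs a + (\<Sum>i<j. P (xs @ [x], a @ [i]))"
    unfolding interval_start_def using assms by (simp add: nth_append)
  then show ?thesis unfolding decision_interval_def by (simp add: algebra_simps)
qed

lemma decision_interval_UN_snoc:
  assumes "nonneg_input (xs @ [x])" and a: "a \<in> assignments m (length xs)"
  shows "decision_interval xs a = (\<Union>j<m. decision_interval (xs @ [x]) (a @ [j]))"
    and "disjoint_family_on (\<lambda>j. decision_interval (xs @ [x]) (a @ [j])) {..<m}"
proof -
  have la: "length a = length xs" using a by (simp add: assignments_def)
  have "a @ [j] \<in> assignments m (length (xs @ [x]))" if "j < m" for j
    using a that by (simp add: assignments_def)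
  then have w: "0 \<le> P (xs @ [x], a @ [j])" if "j < m" for j
    using law_nonneg[OF assms(1)] that by blast
  show "decision_interval xs a = (\<Union>j<m. decision_interval (xs @ [x]) (a @ [j]))"
    unfolding decision_interval_snoc[OF la]
    unfolding decision_interval_def law_snoc[OF assms]
    by (rule atLeastLessThan_UN_partial_sums) (rule w)
  show "disjoint_family_on (\<lambda>j. decision_interval (xs @ [x]) (a @ [j])) {..<m}"
    unfolding decision_interval_snoc[OF la] by (rule disjoint_family_on_partial_sums) (rule w)
qed

lemma decision_intervals_partition:
  assumes "nonneg_input xs"
  shows "(\<Union>a\<in>assignments m (length xs). decision_interval xs a) = {0..<1} \<and>
    disjoint_family_on (decision_interval xs) (assignments m (length xs))"
  using assms
proof (induction xs rule: rev_induct)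
  case Nil
  have "P ([], []) = 1" using law_sum[OF Nil] by (simp add: assignments_0)
  then show ?case
    by (simp add: assignments_0 decision_interval_def interval_start_def disjoint_family_on_def)
next
  case (snoc x xs)
  let ?A = "assignments m (length xs)"
  let ?I = "decision_interval (xs @ [x])"
  have IH: "(\<Union>a\<in>?A. decision_interval xs a) = {0..<1}"
    "disjoint_family_on (decision_interval xs) ?A"
    using snoc.IH[OF nonneg_input_butlast[OF snoc.prems, simplified]] by auto
  note tile = decision_interval_UN_snoc[OF snoc.prems]
  have "(\<Union>b\<in>assignments m (length (xs @ [x])). ?I b) = (\<Union>a\<in>?A. \<Union>j<m. ?I (a @ [j]))"
    by (auto simp: assignments_Suc)
  also have "\<dots> = {0..<1}" using IH(1) tile(1) by simp
  finally have union: "(\<Union>b\<in>assignments m (length (xs @ [x])). ?I b) = {0..<1}" .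
  have "?I (a1 @ [j1]) \<inter> ?I (a2 @ [j2]) = {}"
    if "a1 \<in> ?A" "a2 \<in> ?A" "j1 < m" "j2 < m" "a1 @ [j1] \<noteq> a2 @ [j2]" for a1 a2 j1 j2
  proof (cases "a1 = a2")
    case True
    then have "j1 \<noteq> j2" using that(5) by simp
    then show ?thesis
      using tile(2)[OF that(1)] that(3,4) True unfolding disjoint_family_on_def by blast
  next
    case False
    then have "decision_interval xs a1 \<inter> decision_interval xs a2 = {}"
      using IH(2) that(1,2) unfolding disjoint_family_on_def by blast
    then show ?thesis using tile(1)[OF that(1)] tile(1)[OF that(2)] that(3,4) by blast
  qed
  then have "disjoint_family_on ?I (assignments m (length (xs @ [x])))"
    unfolding disjoint_family_on_def by (auto simp: assignments_Suc)
  with union show ?case by blast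
qed

lemma decision_interval_subset:
  assumes "nonneg_input xs" and "a \<in> assignments m (length xs)"
  shows "decision_interval xs a \<subseteq> {0..<1}"
  using decision_intervals_partition[OF assms(1)] assms(2) by blast

lemma decision_interval_take_subset:
  assumes "nonneg_input xs" and "a \<in> assignments m (length xs)"
  shows "decision_interval xs a \<subseteq> decision_interval (take i xs) (take i a)"
  using assms
proof (induction xs arbitrary: a rule: rev_induct)
  case Nil
  then show ?case by (simp add: assignments_0)
next
  case (snoc x xs)
  obtain a' j where a: "a = a' @ [j]" and a': "a' \<in> assignments m (length xs)" and "j < m"
    using snoc.prems(2) by (auto simp: assignments_Suc)
  have la: "length a' = length xs" using a' by (simp add: assignments_def)
  show ?case
  proof (cases "i \<le> length xs")
    case True
    have "decision_interval (xs @ [x]) a \<subseteq> decision_interval xs a'"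
      using decision_interval_UN_snoc(1)[OF snoc.prems(1) a'] \<open>j < m\<close> a by blast
    also have "\<dots> \<subseteq> decision_interval (take i xs) (take i a')"
      using snoc.IH[OF nonneg_input_butlast[OF snoc.prems(1), simplified] a'] .
    finally show ?thesis using True la a by simp
  next
    case False
    then show ?thesis using la a by simp
  qed
qed

definition sampled_decisions :: "real list \<Rightarrow> real \<Rightarrow> nat list" where
  "sampled_decisions xs u = (THE a. a \<in> assignments m (length xs) \<and> u \<in> decision_interval xs a)"

lemma sampled_decisions_spec:
  assumes "nonneg_input xs" and "u \<in> {0..<1}"
  shows "sampled_decisions xs u \<in> assignments m (length xs) \<and>
    u \<in> decision_interval xs (sampled_decisions xs u)"
  unfolding sampled_decisions_def
proof (rule theI')
  show "\<exists>!a. a \<in> assignments m (length xs) \<and> u \<in> decision_interval xs a"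
    using decision_intervals_partition[OF assms(1)] assms(2)
    unfolding disjoint_family_on_def by blast
qed

lemma sampled_decisions_eq_iff:
  assumes "nonneg_input xs" and "u \<in> {0..<1}" and "a \<in> assignments m (length xs)"
  shows "sampled_decisions xs u = a \<longleftrightarrow> u \<in> decision_interval xs a"
  using sampled_decisions_spec[OF assms(1,2)] decision_intervals_partition[OF assms(1)] assms(3)
  unfolding disjoint_family_on_def by blast

lemma take_sampled_decisions:
  assumes "nonneg_input xs" and "u \<in> {0..<1}"
  shows "take i (sampled_decisions xs u) = sampled_decisions (take i xs) u"
proof -
  let ?a = "sampled_decisions xs u"
  have a: "?a \<in> assignments m (length xs)" "u \<in> decision_interval xs ?a"
    using sampled_decisions_spec[OF assms] by auto
  have "take i ?a \<in> assignments m (length (take i xs))"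
    using a(1) by (auto simp: assignments_def dest: in_set_takeD)
  moreover have "u \<in> decision_interval (take i xs) (take i ?a)"
    using decision_interval_take_subset[OF assms(1) a(1)] a(2) by blast
  ultimately show ?thesis
    using sampled_decisions_eq_iff[OF nonneg_input_take[OF assms(1)] assms(2)] by metis
qed

definition seeded_alg :: "real \<Rightarrow> real list \<Rightarrow> nat" where
  "seeded_alg u ys = (if nonneg_input ys \<and> ys \<noteq> [] then last (sampled_decisions ys u) else 0)"

lemma decisions_seeded_alg:
  assumes "nonneg_input xs" and "u \<in> {0..<1}"
  shows "decisions (seeded_alg u) xs = sampled_decisions xs u"
proof (rule nth_equalityI)
  show "length (decisions (seeded_alg u) xs) = length (sampled_decisions xs u)"
    using sampled_decisions_spec[OF assms] by (simp add: assignments_def decisions_def)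
  fix i assume "i < length (decisions (seeded_alg u) xs)"
  then have i: "i < length xs" by (simp add: decisions_def)
  have "take (Suc i) xs \<noteq> []" using i by (cases xs) auto
  then have "seeded_alg u (take (Suc i) xs) = last (take (Suc i) (sampled_decisions xs u))"
    using nonneg_input_take[OF assms(1)] take_sampled_decisions[OF assms] by (simp add: seeded_alg_def)
  also have "\<dots> = sampled_decisions xs u ! i"
    using i sampled_decisions_spec[OF assms] by (simp add: assignments_def take_Suc_conv_app_nth)
  finally show "decisions (seeded_alg u) xs ! i = sampled_decisions xs u ! i"
    using i by (simp add: decisions_def)
qed

lemma det_alg_seeded_alg:
  assumes "u \<in> {0..<1}"
  shows "det_alg m (seeded_alg u)"
  unfolding det_alg_def
proof (intro allI impI)
  fix xs :: "real list" assume xs: "xs \<noteq> [] \<and> nonneg_input xs"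
  then have a: "sampled_decisions xs u \<in> assignments m (length xs)" using sampled_decisions_spec assms by blast
  then have "sampled_decisions xs u \<noteq> []" using xs by (auto simp: assignments_def)
  then have "last (sampled_decisions xs u) \<in> set (sampled_decisions xs u)" by (rule last_in_set)
  then have "last (sampled_decisions xs u) < m" using a by (auto simp: assignments_def)
  then show "seeded_alg u xs < m" using xs by (simp add: seeded_alg_def)
qed

lemma sampled_decisions_preimage:
  assumes "nonneg_input xs" and "a \<in> assignments m (length xs)"
  shows "{u \<in> {0..<1}. sampled_decisions xs u = a} = decision_interval xs a"
proof (intro equalityI subsetI)
  fix u assume "u \<in> {u \<in> {0..<1}. sampled_decisions xs u = a}"
  then show "u \<in> decision_interval xs a" using sampled_decisions_eq_iff[OF assms(1) _ assms(2)] by blast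
next
  fix u assume u: "u \<in> decision_interval xs a"
  then have "u \<in> {0..<1}" using decision_interval_subset[OF assms] by blast
  with u show "u \<in> {u \<in> {0..<1}. sampled_decisions xs u = a}"
    using sampled_decisions_eq_iff[OF assms(1) _ assms(2)] by blast
qed

lemma measurable_sampled_decisions:
  assumes "nonneg_input xs"
  shows "sampled_decisions xs \<in> measurable (restrict_space lborel {0..<1}) (count_space UNIV)"
proof (subst measurable_count_space_eq2_countable, intro conjI ballI)
  show "sampled_decisions xs \<in> space (restrict_space lborel {0..<1}) \<rightarrow> UNIV" by simp
  fix a :: "nat list"
  have "sampled_decisions xs -` {a} \<inter> space (restrict_space lborel {0..<1})
      = {u \<in> {0..<1}. sampled_decisions xs u = a}"
    by (auto simp: space_restrict_space)
  also have "\<dots> \<in> sets (restrict_space lborel {0..<1})"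
  proof (cases "a \<in> assignments m (length xs)")
    case True
    then show ?thesis
      unfolding sampled_decisions_preimage[OF assms True] using decision_interval_subset[OF assms True]
      by (simp add: sets_restrict_space_iff decision_interval_def)
  next
    case False
    then have "{u \<in> {0..<1}. sampled_decisions xs u = a} = {}" using sampled_decisions_spec[OF assms] by auto
    then show ?thesis by (simp only: sets.empty_sets)
  qed
  finally show "sampled_decisions xs -` {a} \<inter> space (restrict_space lborel {0..<1})
      \<in> sets (restrict_space lborel {0..<1})" .
qed

lemma measurable_seeded_alg:
  "(\<lambda>u. seeded_alg u ys) \<in> measurable (restrict_space lborel {0..<1}) (count_space UNIV)"
proof (cases "nonneg_input ys \<and> ys \<noteq> []")
  case True
  have "(\<lambda>u. last (sampled_decisions ys u)) \<in> measurable (restrict_space lborel {0..<1}) (count_space UNIV)"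
    using measurable_sampled_decisions True by (intro measurable_compose[OF _ measurable_count_space]) auto
  then show ?thesis unfolding seeded_alg_def if_P[OF True] .
next
  case False
  show ?thesis unfolding seeded_alg_def if_not_P[OF False] by simp
qed

lemma decision_law_seeded_alg:
  assumes "nonneg_input xs" and "a \<in> assignments m (length xs)"
  shows "decision_law (restrict_space lborel {0..<1}) seeded_alg (xs, a) = P (xs, a)"
proof -
  have "{u \<in> space (restrict_space lborel {0..<1}). decisions (seeded_alg u) xs = a}
      = {u \<in> {0..<1}. sampled_decisions xs u = a}"
    using decisions_seeded_alg[OF assms(1)] by (auto simp: space_restrict_space)
  also have "\<dots> = decision_interval xs a" by (rule sampled_decisions_preimage[OF assms])
  finally have "decision_law (restrict_space lborel {0..<1}) seeded_alg (xs, a)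
      = measure (restrict_space lborel {0..<1}) (decision_interval xs a)"
    by (simp add: decision_law_def)
  also have "\<dots> = P (xs, a)"
    using decision_interval_subset[OF assms] law_nonneg[OF assms]
    by (simp add: measure_restrict_space decision_interval_def)
  finally show ?thesis .
qed

lemma measurable_seeded_alg_det_algs:
  "seeded_alg \<in> measurable (restrict_space lborel {0..<1})
    (restrict_space (\<Pi>\<^sub>M ys\<in>UNIV. count_space UNIV) {B. det_alg m B})"
proof (rule measurable_restrict_space2)
  show "seeded_alg \<in> space (restrict_space lborel {0..<1}) \<rightarrow> {B. det_alg m B}"
    by (auto simp: space_restrict_space det_alg_seeded_alg)
  show "seeded_alg \<in> measurable (restrict_space lborel {0..<1}) (\<Pi>\<^sub>M ys\<in>UNIV. count_space UNIV)"
    by (rule measurable_PiM_single') (simp_all add: measurable_seeded_alg)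
qed

lemma nn_integral_seeded_alg:
  assumes "0 < m" and xs: "nonneg_input xs"
  shows "(\<integral>\<^sup>+u. ennreal (alg_min_load m (seeded_alg u) xs) \<partial>restrict_space lborel {0..<1})
    = ennreal (expected_min_load m P xs)"
proof -
  interpret U: prob_space "restrict_space lborel {0..<1::real}"
    by (intro prob_space_restrict_space) simp_all
  have "(\<integral>\<^sup>+u. ennreal (alg_min_load m (seeded_alg u) xs) \<partial>restrict_space lborel {0..<1})
      = ennreal (expected_min_load m (decision_law (restrict_space lborel {0..<1}) seeded_alg) xs)"
  proof (rule U.nn_integral_alg_min_load[OF measurable_seeded_alg _ assms])
    fix u i assume "u \<in> space (restrict_space lborel {0..<1::real})" and "i < length xs"
    then have "u \<in> {0..<1}" by (simp add: space_restrict_space)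
    then have "decisions (seeded_alg u) xs \<in> assignments m (length xs)"
      using decisions_seeded_alg[OF xs] sampled_decisions_spec[OF xs] by simp
    then show "seeded_alg u (take (Suc i) xs) < m"
      using \<open>i < length xs\<close> by (simp add: assignments_def decisions_def subset_iff)
  qed
  also have "expected_min_load m (decision_law (restrict_space lborel {0..<1}) seeded_alg) xs
      = expected_min_load m P xs"
    unfolding expected_min_load_def by (simp add: decision_law_seeded_alg[OF xs])
  finally show ?thesis .
qed

lemma rand_alg_of_decision_laws:
  assumes "0 < m"
  shows "\<exists>MB. rand_alg m MB \<and> (\<forall>xs. nonneg_input xs \<longrightarrow>
    (\<integral>\<^sup>+D. ennreal (alg_min_load m D xs) \<partial>MB) = ennreal (expected_min_load m P xs))"
proof -
  define U where "U = restrict_space lborel {0..<1::real}"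
  define Algs where "Algs = restrict_space (\<Pi>\<^sub>M ys\<in>UNIV. count_space UNIV) {B. det_alg m B}"
  define MB where "MB = distr U Algs seeded_alg"
  interpret U: prob_space U
    unfolding U_def by (intro prob_space_restrict_space) simp_all
  have seeded_alg_meas: "seeded_alg \<in> measurable U Algs"
    unfolding U_def Algs_def by (rule measurable_seeded_alg_det_algs)
  have eval_meas: "(\<lambda>D. D ys) \<in> measurable Algs (count_space UNIV)" for ys
    unfolding Algs_def by (intro measurable_restrict_space1 measurable_component_singleton) simp
  have "rand_alg m MB"
    unfolding rand_alg_def
  proof (intro conjI ballI allI)
    show "prob_space MB" unfolding MB_def using seeded_alg_meas by (rule U.prob_space_distr)
    show "det_alg m D" if "D \<in> space MB" for D
      using that by (simp add: MB_def Algs_def space_restrict_space)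
    show "(\<lambda>D. D ys) \<in> measurable MB (count_space UNIV)" for ys
      unfolding MB_def using eval_meas by simp
  qed
  moreover have "(\<integral>\<^sup>+D. ennreal (alg_min_load m D xs) \<partial>MB) = ennreal (expected_min_load m P xs)"
    if xs: "nonneg_input xs" for xs
  proof -
    have "(\<lambda>D. ennreal (assignment_min_load m (decisions D xs) xs)) \<in> borel_measurable Algs"
      using measurable_decisions[OF eval_meas] by (rule measurable_compose) simp
    then have "(\<integral>\<^sup>+D. ennreal (alg_min_load m D xs) \<partial>MB)
        = (\<integral>\<^sup>+u. ennreal (alg_min_load m (seeded_alg u) xs) \<partial>U)"
      unfolding MB_def alg_min_load_decisions using seeded_alg_meas by (simp add: nn_integral_distr)
    also have "\<dots> = ennreal (expected_min_load m P xs)"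
      unfolding U_def using assms xs by (rule nn_integral_seeded_alg)
    finally show ?thesis .
  qed
  ultimately show ?thesis by blast
qed

end

lemma rand_alg_of_rand_alg_n:
  assumes MA: "rand_alg_n m MA" and comp: "rand_competitive_n m c MA"
  shows "\<exists>MB. rand_alg m MB \<and> rand_competitive m c MB"
proof -
  have m: "0 < m" using MA by (rule rand_alg_n_pos)
  obtain P where P: "\<And>xs. nonneg_input xs \<Longrightarrow>
      is_decision_law m P xs \<and> OPT m xs / c \<le> expected_min_load m P xs"
    using decision_laws_of_rand_alg_n[OF MA comp] by blast
  interpret decision_laws m P by unfold_locales (use P in blast)
  obtain MB where "rand_alg m MB" and integral: "\<And>xs. nonneg_input xs \<Longrightarrow>
      (\<integral>\<^sup>+D. ennreal (alg_min_load m D xs) \<partial>MB) = ennreal (expected_min_load m P xs)"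
    using rand_alg_of_decision_laws[OF m] by blast
  moreover have "rand_competitive m c MB"
    unfolding rand_competitive_def using P integral by (auto intro: ennreal_leI)
  ultimately show ?thesis by blast
qed

theorem proposition18:
  fixes m :: nat and c :: real
  shows "(\<forall>MA. rand_alg_n m MA \<and> rand_competitive_n m c MA \<longrightarrow>
            (\<exists>MB. rand_alg m MB \<and> rand_competitive m c MB))
       \<and> (\<forall>A. det_alg_n m A \<and> det_competitive_n m c A \<longrightarrow>
            (\<exists>B. det_alg m B \<and> det_competitive m c B))"
  using rand_alg_of_rand_alg_n det_alg_of_det_alg_n by blast

end
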